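(* Let $\mathscr{C}=\{(\boldsymbol{u}(i),\mathcal{D}_i)\}_{i=1}^M$ be a code from the family $\mathsf{C}(C,\boldsymbol{A},\boldsymbol{L},\boldsymbol{\alpha},\boldsymbol{p},\boldsymbol{r})$ described below. Then $\mathscr{C}$ is an $(n,M,\mathcal{X},\epsilon,B,\delta)$-code for the complex AWGN channel with noise variance $\sigma^2$ if the following inequalities are simultaneously satisfied: \[ \epsilon\ge 1-\frac1M\sum_{i=1}^M\prod_{c=1}^C\left(1-\exp\!\left(-\frac{r_c^2}{\sigma^2}\right)\right)^{n\sum_{\ell=1}^{L_c}P_{\boldsymbol{u}(i)}(x_c^{(\ell)})}, \] \[ R(\mathscr{C})\le\log_2\left(\sum_{c=1}^C\left\lfloor\frac{\pi}{2\arcsin\frac{r_c}{2A_c}}\right\rfloor\right), \] \[ \delta\ge\frac1M\sum_{i=1}^M\mathbb{1}_{\left\{\sum_{c=1}^C\sum_{\ell=1}^{L_c}P_{\boldsymbol{u}(i)}(x_c^{(\ell)})(k_1A_c^2+k_2A_c^4)<\frac{B}{n}\right\}}, \] \[ B\le\bar e_{j^{+}}, \] where $\bar e_1<\dots<\bar e_{M'}$ are the distinct values among $e_1,\dots,e_M$ and $j^{+}=\min\{j\in\{1,\dots,M'\}:\ \delta\le\frac1M\sum_{k=1}^j\sum_{i=1}^M\mathbb{1}_{\{e_i=\bar e_k\}}\}$.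
   Context: Channel: $f_{\boldsymbol{Y}|\boldsymbol{X}}(\boldsymbol{y}|\boldsymbol{\nu})=\prod_{m=1}^n \frac{1}{\pi\sigma^2}\exp(-|y_m-\nu_m|^2/\sigma^2)$. An $(n,M,\mathcal{X})$-code is $\{(\boldsymbol{u}(i),\mathcal{D}_i)\}_{i=1}^M$ with $\boldsymbol{u}(i)\in\mathcal{X}^n$ and pairwise disjoint $\mathcal{D}_i\subseteq\mathbb{C}^n$; $R(\mathscr{C})=\frac{\log_2M}{n}$; $\gamma(\mathscr{C})=\frac1M\sum_i\big(1-\int_{\mathcal{D}_i}f_{\boldsymbol{Y}|\boldsymbol{X}}(\boldsymbol{y}|\boldsymbol{u}(i))\mathrm{d}\boldsymbol{y}\big)$; $e_i=k_1\sum_m|u_m(i)|^2+k_2\sum_m|u_m(i)|^4$ with positive constants $k_1,k_2$; $\theta(\mathscr{C},B)=\frac1M\sum_i\mathbb{1}_{\{e_i<B\}}$; an $(n,M,\mathcal{X},\epsilon,B,\delta)$-code is one with $\gamma(\mathscr{C})\le\epsilon$, $\theta(\mathscr{C},B)\le\delta$. Types: $P_{\boldsymbol{u}(i)}(x)=\frac1n\sum_m\mathbb{1}_{\{u_m(i)=x\}}$, $P_{\mathscr{C}}=\frac1M\sum_iP_{\boldsymbol{u}(i)}$. Family $\mathsf{C}(C,\boldsymbol{A},\boldsymbol{L},\boldsymbol{\alpha},\boldsymbol{p},\boldsymbol{r})$: $C\in\mathbb{N}$ layers; amplitudes $A_1>A_2>\dots>A_C>0$; $L_c\in\mathbb{N}$;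 phases $\alpha_c\in[0,2\pi]$; layer $c$ is $\mathcal{U}(A_c,L_c,\alpha_c)=\{x_c^{(1)},\dots,x_c^{(L_c)}\}=\{A_c\exp(\mathrm{i}(2\pi\ell/L_c+\alpha_c)):\ell=0,\dots,L_c-1\}$, and $\mathcal{X}=\bigcup_{c=1}^C\mathcal{U}(A_c,L_c,\alpha_c)$. The codewords are pairwise distinct elements of $\mathcal{X}^n$ with $P_{\mathscr{C}}(x_c^{(\ell)})=p_c/L_c$ for all $c,\ell$, where $\boldsymbol{p}=(p_1,\dots,p_C)$ is a probability vector. With radii $r_c>0$, let $\mathcal{G}_c^{(\ell)}=\{y\in\mathbb{C}:|y-x_c^{(\ell)}|\le r_c\}$; the decoding set of $\boldsymbol{u}(i)$ is $\mathcal{D}_i=\mathcal{D}_{i,1}\times\dots\times\mathcal{D}_{i,n}$ with $\mathcal{D}_{i,m}=\mathcal{G}_c^{(\ell)}$ where $u_m(i)=x_c^{(\ell)}$; and $A_c-A_{c+1}\ge r_c+r_{c+1}$ for $c=1,\dots,C-1$. *)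

theory Defs
  imports "HOL-Analysis.Analysis"
begin

text \<open>Conventions: layers are indexed by c in {1..C}; the points of layer c are
  indexed by l in {0..<L c}; codewords are indexed by i in {1..M}; the block length
  is n = CARD('n), codeword symbols are indexed by the finite type 'n.\<close>

definition xpt :: "(nat \<Rightarrow> real) \<Rightarrow> (nat \<Rightarrow> nat) \<Rightarrow> (nat \<Rightarrow> real) \<Rightarrow> nat \<Rightarrow> nat \<Rightarrow> complex" where
  "xpt A L \<alpha> c l = complex_of_real (A c) *
      exp (\<i> * complex_of_real (2 * pi * real l / real (L c) + \<alpha> c))"

definition ulayer :: "(nat \<Rightarrow> real) \<Rightarrow> (nat \<Rightarrow> nat) \<Rightarrow> (nat \<Rightarrow> real) \<Rightarrow> nat \<Rightarrow> complex set" where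
  "ulayer A L \<alpha> c = {xpt A L \<alpha> c l | l. l < L c}"

definition constellation :: "nat \<Rightarrow> (nat \<Rightarrow> real) \<Rightarrow> (nat \<Rightarrow> nat) \<Rightarrow> (nat \<Rightarrow> real) \<Rightarrow> complex set" where
  "constellation C A L \<alpha> = (\<Union>c\<in>{1..C}. ulayer A L \<alpha> c)"

definition type_of_word :: "complex ^ 'n::finite \<Rightarrow> complex \<Rightarrow> real" where
  "type_of_word v x = real (card {m. v $ m = x}) / real CARD('n)"

definition type_of_code :: "nat \<Rightarrow> (nat \<Rightarrow> complex ^ 'n::finite) \<Rightarrow> complex \<Rightarrow> real" where
  "type_of_code M u x = (1 / real M) * (\<Sum>i\<in>{1..M}. type_of_word (u i) x)"

definition awgn_density :: "real \<Rightarrow> complex ^ 'n::finite \<Rightarrow> complex ^ 'n \<Rightarrow> real" where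
  "awgn_density \<sigma> y \<nu> =
     (\<Prod>m\<in>UNIV. 1 / (pi * \<sigma>\<^sup>2) * exp (- (cmod (y $ m - \<nu> $ m))\<^sup>2 / \<sigma>\<^sup>2))"

definition code_rate :: "nat \<Rightarrow> real" where
  "code_rate M = log 2 (real M) / real CARD('n::finite)"

definition avg_error :: "real \<Rightarrow> nat \<Rightarrow> (nat \<Rightarrow> complex ^ 'n::finite) \<Rightarrow> (nat \<Rightarrow> (complex ^ 'n) set) \<Rightarrow> real" where
  "avg_error \<sigma> M u D = (1 / real M) *
     (\<Sum>i\<in>{1..M}. 1 - set_lebesgue_integral lborel (D i) (\<lambda>y. awgn_density \<sigma> y (u i)))"

definition energy :: "real \<Rightarrow> real \<Rightarrow> complex ^ 'n::finite \<Rightarrow> real" where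
  "energy k1 k2 v = k1 * (\<Sum>m\<in>UNIV. (cmod (v $ m))\<^sup>2) + k2 * (\<Sum>m\<in>UNIV. (cmod (v $ m)) ^ 4)"

definition energy_outage :: "real \<Rightarrow> real \<Rightarrow> nat \<Rightarrow> (nat \<Rightarrow> complex ^ 'n::finite) \<Rightarrow> real \<Rightarrow> real" where
  "energy_outage k1 k2 M u B = (1 / real M) * real (card {i\<in>{1..M}. energy k1 k2 (u i) < B})"

definition is_code :: "complex set \<Rightarrow> nat \<Rightarrow> (nat \<Rightarrow> complex ^ 'n::finite) \<Rightarrow> (nat \<Rightarrow> (complex ^ 'n) set) \<Rightarrow> bool" where
  "is_code X M u D \<longleftrightarrow>
     (\<forall>i\<in>{1..M}. \<forall>m. u i $ m \<in> X) \<and>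
     (\<forall>i\<in>{1..M}. \<forall>j\<in>{1..M}. i \<noteq> j \<longrightarrow> D i \<inter> D j = {})"

definition is_code_eBd :: "real \<Rightarrow> real \<Rightarrow> real \<Rightarrow> complex set \<Rightarrow> nat \<Rightarrow> (nat \<Rightarrow> complex ^ 'n::finite)
     \<Rightarrow> (nat \<Rightarrow> (complex ^ 'n) set) \<Rightarrow> real \<Rightarrow> real \<Rightarrow> real \<Rightarrow> bool" where
  "is_code_eBd \<sigma> k1 k2 X M u D \<epsilon> B \<delta> \<longleftrightarrow>
     is_code X M u D \<and> avg_error \<sigma> M u D \<le> \<epsilon> \<and> energy_outage k1 k2 M u B \<le> \<delta>"

definition decoding_set :: "nat \<Rightarrow> (nat \<Rightarrow> real) \<Rightarrow> (nat \<Rightarrow> nat) \<Rightarrow> (nat \<Rightarrow> real) \<Rightarrow> (nat \<Rightarrow> real)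
     \<Rightarrow> complex ^ 'n::finite \<Rightarrow> (complex ^ 'n) set" where
  "decoding_set C A L \<alpha> r v =
     {y. \<forall>m. \<forall>c\<in>{1..C}. \<forall>l<L c. v $ m = xpt A L \<alpha> c l \<longrightarrow> cmod (y $ m - xpt A L \<alpha> c l) \<le> r c}"

definition in_family :: "nat \<Rightarrow> (nat \<Rightarrow> real) \<Rightarrow> (nat \<Rightarrow> nat) \<Rightarrow> (nat \<Rightarrow> real) \<Rightarrow> (nat \<Rightarrow> real)
     \<Rightarrow> (nat \<Rightarrow> real) \<Rightarrow> nat \<Rightarrow> (nat \<Rightarrow> complex ^ 'n::finite) \<Rightarrow> (nat \<Rightarrow> (complex ^ 'n) set) \<Rightarrow> bool" where
  "in_family C A L \<alpha> p r M u D \<longleftrightarrow>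
     1 \<le> C \<and>
     (\<forall>c\<in>{1..C}. 1 \<le> L c \<and> 0 < A c \<and> 0 \<le> \<alpha> c \<and> \<alpha> c \<le> 2 * pi \<and> 0 < r c \<and> 0 \<le> p c) \<and>
     (\<forall>c\<in>{1..<C}. A (c + 1) < A c \<and> r c + r (c + 1) \<le> A c - A (c + 1)) \<and>
     sum p {1..C} = 1 \<and>
     (\<forall>i\<in>{1..M}. \<forall>m. u i $ m \<in> constellation C A L \<alpha>) \<and>
     inj_on u {1..M} \<and>
     (\<forall>c\<in>{1..C}. \<forall>l<L c. type_of_code M u (xpt A L \<alpha> c l) = p c / real (L c)) \<and>
     (\<forall>i\<in>{1..M}. D i = decoding_set C A L \<alpha> r (u i))"

definition energy_values :: "real \<Rightarrow> real \<Rightarrow> nat \<Rightarrow> (nat \<Rightarrow> complex ^ 'n::finite) \<Rightarrow> real set" where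
  "energy_values k1 k2 M u = (\<lambda>i. energy k1 k2 (u i)) ` {1..M}"

definition ebar :: "real \<Rightarrow> real \<Rightarrow> nat \<Rightarrow> (nat \<Rightarrow> complex ^ 'n::finite) \<Rightarrow> nat \<Rightarrow> real" where
  "ebar k1 k2 M u k = sorted_list_of_set (energy_values k1 k2 M u) ! (k - 1)"

definition jplus_set :: "real \<Rightarrow> real \<Rightarrow> nat \<Rightarrow> (nat \<Rightarrow> complex ^ 'n::finite) \<Rightarrow> real \<Rightarrow> nat set" where
  "jplus_set k1 k2 M u \<delta> =
     {j \<in> {1..card (energy_values k1 k2 M u)}.
        \<delta> \<le> (1 / real M) * (\<Sum>k\<in>{1..j}. real (card {i\<in>{1..M}. energy k1 k2 (u i) = ebar k1 k2 M u k}))}"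

end

theory Submission
  imports Defs
begin

text \<open>Layers have distinct amplitudes, so every symbol of a codeword lies in exactly one layer
  and the decoding set of a codeword is a product of discs, one around each symbol, with the
  radius of its layer. The noise is a product of independent circular Gaussians, and a circular
  Gaussian of variance \<open>\<sigma>\<^sup>2\<close> puts mass \<open>1 - exp (- \<rho>\<^sup>2 / \<sigma>\<^sup>2)\<close> on the disc of radius \<open>\<rho>\<close>
  around its mean (layer-cake formula and Fubini: at level \<open>t\<close> one integrates over a disc of
  area \<open>\<pi> t\<close>). So a codeword with \<open>n\<^sub>c\<close> symbols in layer \<open>c\<close> is decoded correctly with
  probability \<open>\<Prod>\<^sub>c (1 - exp (- r\<^sub>c\<^sup>2 / \<sigma>\<^sup>2)) ^ n\<^sub>c\<close>, which gives the error bound.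
  A codeword of energy below \<open>B \<le> e\<^sub>j\<^sub>+\<close> has one of the energies \<open>e\<^sub>1, \<dots>, e\<^sub>j\<^sub>+\<^sub>-\<^sub>1\<close>,
  and by minimality of \<open>j\<^sup>+\<close> the fraction of such codewords is below \<open>\<delta>\<close>.\<close>

lemma prod_Basis_vec:
  "(\<Prod>b\<in>(Basis :: ('a::euclidean_space ^ 'n) set). f b) = (\<Prod>i\<in>UNIV. \<Prod>c\<in>Basis. f (axis i c))"
proof -
  have "(\<Prod>b\<in>(Basis :: ('a ^ 'n) set). f b) = (\<Prod>i\<in>UNIV. prod f (\<Union>c\<in>Basis. {axis i c}))"
    unfolding Basis_vec_def by (rule prod.UNION_disjoint) (auto simp: axis_eq_axis)
  also have "\<dots> = (\<Prod>i\<in>UNIV. \<Prod>c\<in>Basis. f (axis i c))"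
    by (intro prod.cong refl, subst prod.UNION_disjoint) (auto simp: axis_eq_axis)
  finally show ?thesis .
qed

lemma measurable_vec_lambda:
  "(vec_lambda :: ('n \<Rightarrow> 'a::euclidean_space) \<Rightarrow> 'a ^ 'n) \<in> PiM UNIV (\<lambda>_. lborel) \<rightarrow>\<^sub>M borel"
proof (subst borel_measurable_euclidean_space, intro ballI)
  fix b :: "'a ^ 'n" assume "b \<in> Basis"
  then obtain i c where b: "b = axis i c" unfolding Basis_vec_def by auto
  have "(\<lambda>x. x i \<bullet> c) \<in> borel_measurable (PiM UNIV (\<lambda>_. (lborel :: 'a measure)))"
    by measurable
  then show "(\<lambda>x. vec_lambda x \<bullet> b) \<in> borel_measurable (PiM UNIV (\<lambda>_. lborel))"
    by (simp add: b inner_axis)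
qed

lemma lborel_vec_eq_distr_PiM:
  "(lborel :: ('a::euclidean_space ^ 'n) measure) = distr (PiM UNIV (\<lambda>_. lborel)) borel vec_lambda"
proof (rule lborel_eqI)
  interpret P: product_sigma_finite "\<lambda>_::'n. (lborel :: 'a measure)" ..
  fix l u :: "'a ^ 'n"
  assume le: "\<And>b. b \<in> Basis \<Longrightarrow> l \<bullet> b \<le> u \<bullet> b"
  have le_nth: "c \<in> Basis \<Longrightarrow> l $ i \<bullet> c \<le> u $ i \<bullet> c" for i c
    using le by (metis axis_in_Basis_iff inner_axis)
  have preimage: "vec_lambda -` box l u \<inter> space (PiM UNIV (\<lambda>_. (lborel :: 'a measure))) =
      PiE UNIV (\<lambda>i. box (l $ i) (u $ i))"
    by (auto simp: mem_box Basis_vec_def inner_axis space_PiM PiE_iff)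
  have "emeasure (distr (PiM UNIV (\<lambda>_. lborel)) borel vec_lambda) (box l u) =
      (\<Prod>i\<in>UNIV. emeasure lborel (box (l $ i) (u $ i)))"
    by (simp add: emeasure_distr[OF measurable_vec_lambda] preimage P.emeasure_PiM)
  also have "\<dots> = ennreal (\<Prod>i\<in>UNIV. \<Prod>c\<in>Basis. (u $ i - l $ i) \<bullet> c)"
    using le_nth by (simp add: inner_diff_left prod_ennreal prod_nonneg)
  also have "\<dots> = ennreal (\<Prod>b\<in>Basis. (u - l) \<bullet> b)"
    by (simp add: prod_Basis_vec inner_axis)
  finally show "emeasure (distr (PiM UNIV (\<lambda>_. lborel)) borel vec_lambda) (box l u) =
      (\<Prod>b\<in>Basis. (u - l) \<bullet> b)" .
qed simp

lemma borel_measurable_vec_nth[measurable]: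
  "(\<lambda>x::'a::euclidean_space ^ 'n. x $ m) \<in> borel_measurable borel"
  by (intro borel_measurable_continuous_onI continuous_intros)

lemma nn_integral_lborel_vec_prod:
  fixes f :: "'n::finite \<Rightarrow> 'a::euclidean_space \<Rightarrow> ennreal"
  assumes [measurable]: "\<And>m. f m \<in> borel_measurable borel"
  shows "(\<integral>\<^sup>+y. (\<Prod>m\<in>UNIV. f m (y $ m)) \<partial>lborel) = (\<Prod>m\<in>UNIV. \<integral>\<^sup>+z. f m z \<partial>lborel)"
proof -
  interpret P: product_sigma_finite "\<lambda>_::'n. (lborel :: 'a measure)" ..
  have "(\<integral>\<^sup>+y. (\<Prod>m\<in>UNIV. f m (y $ m)) \<partial>lborel) =
      (\<integral>\<^sup>+x. (\<Prod>m\<in>UNIV. f m (x m)) \<partial>PiM UNIV (\<lambda>_. lborel))"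
    by (subst lborel_vec_eq_distr_PiM, subst nn_integral_distr[OF measurable_vec_lambda]) simp_all
  also have "\<dots> = (\<Prod>m\<in>UNIV. \<integral>\<^sup>+z. f m z \<partial>lborel)"
    by (rule P.product_nn_integral_prod) auto
  finally show ?thesis .
qed

lemma ennreal_exp_eq_nn_integral_Icc:
  fixes \<tau> a S :: real
  assumes "0 < \<tau>" "a \<le> S"
  shows "ennreal (exp (- a / \<tau>)) = ennreal (exp (- S / \<tau>)) +
     (\<integral>\<^sup>+t. ennreal (exp (- t / \<tau>) / \<tau>) * indicator {a..S} t \<partial>lborel)"
proof -
  have "(\<integral>\<^sup>+t. ennreal (exp (- t / \<tau>) / \<tau>) * indicator {a..S} t \<partial>lborel)
      = ennreal ((\<lambda>t. - exp (- t / \<tau>)) S - (\<lambda>t. - exp (- t / \<tau>)) a)"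
  proof (rule nn_integral_FTC_Icc)
    fix x assume "x \<in> {a..S}"
    show "((\<lambda>t. - exp (- t / \<tau>)) has_real_derivative exp (- x / \<tau>) / \<tau>) (at x)"
      using assms by (auto intro!: derivative_eq_intros simp: field_simps)
  qed (use assms in auto)
  moreover have "exp (- S / \<tau>) \<le> exp (- a / \<tau>)"
    using assms by (simp add: divide_right_mono)
  ultimately show ?thesis
    by (simp add: ennreal_plus[symmetric] del: ennreal_plus)
qed

lemma nn_integral_Icc_exp_mult_linear:
  fixes \<tau> S :: real
  assumes "0 < \<tau>" "0 \<le> S"
  shows "(\<integral>\<^sup>+t. ennreal (exp (- t / \<tau>) / \<tau> * (pi * t)) * indicator {0..S} t \<partial>lborel)
      = ennreal (pi * \<tau> - pi * (S + \<tau>) * exp (- S / \<tau>))"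
proof -
  have "(\<integral>\<^sup>+t. ennreal (exp (- t / \<tau>) / \<tau> * (pi * t)) * indicator {0..S} t \<partial>lborel)
      = ennreal ((\<lambda>t. - pi * (t + \<tau>) * exp (- t / \<tau>)) S - (\<lambda>t. - pi * (t + \<tau>) * exp (- t / \<tau>)) 0)"
  proof (rule nn_integral_FTC_Icc)
    fix x assume "x \<in> {0..S}"
    show "((\<lambda>t. - pi * (t + \<tau>) * exp (- t / \<tau>)) has_real_derivative exp (- x / \<tau>) / \<tau> * (pi * x)) (at x)"
      using assms by (auto intro!: derivative_eq_intros simp: field_simps)
  qed (use assms in auto)
  then show ?thesis by (simp add: algebra_simps)
qed

lemma emeasure_cball_complex:
  "0 \<le> s \<Longrightarrow> emeasure lborel (cball (a::complex) s) = ennreal (pi * s\<^sup>2)"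
  by (simp add: emeasure_cball unit_ball_vol_2 mult.commute)

lemma cball_inter_norm_sq_le:
  fixes s t :: real
  assumes "t \<le> s\<^sup>2" "0 \<le> s"
  shows "{z. z \<in> cball (0::'a::real_normed_vector) s \<and> (norm z)\<^sup>2 \<le> t} = cball 0 (sqrt t)"
proof -
  have "sqrt t \<le> s"
    using assms real_sqrt_le_mono[of t "s\<^sup>2"] by simp
  then show ?thesis
    using real_sqrt_le_iff[of "(norm z)\<^sup>2" t for z :: 'a] by (force simp del: real_sqrt_le_iff)
qed

lemma nn_integral_cball_exp_norm_sq_layer_cake:
  fixes \<tau> s :: real
  assumes \<tau>: "0 < \<tau>" and s: "0 \<le> s"
  shows "(\<integral>\<^sup>+z. indicator (cball (0::complex) s) z * ennreal (exp (- (cmod z)\<^sup>2 / \<tau>)) \<partial>lborel)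
      = ennreal (exp (- s\<^sup>2 / \<tau>) * (pi * s\<^sup>2)) +
        (\<integral>\<^sup>+t. ennreal (exp (- t / \<tau>) / \<tau> * (pi * t)) * indicator {0..s\<^sup>2} t \<partial>lborel)"
proof -
  define S where "S = s\<^sup>2"
  have [measurable]: "cball (0::complex) s \<in> sets borel" by (simp add: borel_closed)
  txt \<open>On the disc, \<open>exp (- |z|\<^sup>2 / \<tau>) = exp (- S / \<tau>) + \<integral>\<^bsub>|z|\<^sup>2..S\<^esub> exp (- t / \<tau>) / \<tau> dt\<close>;
    \<open>H z\<close> is the integrand of the second term.\<close>
  define H where "H z t = indicator (cball (0::complex) s) z * ennreal (exp (- t / \<tau>) / \<tau>) *
      (if (cmod z)\<^sup>2 \<le> t \<and> t \<le> S then 1 else 0 :: ennreal)" for z t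
  have H_meas: "case_prod H \<in> borel_measurable (lborel \<Otimes>\<^sub>M lborel)"
  proof -
    have "case_prod H \<in> borel_measurable (borel \<Otimes>\<^sub>M borel)"
      unfolding H_def by measurable
    then show ?thesis
      by (simp cong: measurable_cong_sets add: sets_pair_measure_cong[OF sets_lborel sets_lborel])
  qed
  have layer_cake: "indicator (cball 0 s) z * ennreal (exp (- (cmod z)\<^sup>2 / \<tau>)) =
      indicator (cball 0 s) z * ennreal (exp (- S / \<tau>)) + (\<integral>\<^sup>+t. H z t \<partial>lborel)" for z
  proof (cases "z \<in> cball 0 s")
    case True
    then have "(cmod z)\<^sup>2 \<le> S" unfolding S_def using s by (auto intro!: power_mono)
    moreover have "H z = (\<lambda>t. ennreal (exp (- t / \<tau>) / \<tau>) * indicator {(cmod z)\<^sup>2..S} t)"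
      using True by (auto simp: H_def fun_eq_iff split: split_indicator)
    ultimately show ?thesis
      using True ennreal_exp_eq_nn_integral_Icc[OF \<tau>, of "(cmod z)\<^sup>2" S] by simp
  qed (simp add: H_def)
  have disc_slice: "(\<integral>\<^sup>+z. H z t \<partial>lborel) = ennreal (exp (- t / \<tau>) / \<tau> * (pi * t)) * indicator {0..S} t"
    for t
  proof (cases "0 \<le> t \<and> t \<le> S")
    case True
    then have "H z t = ennreal (exp (- t / \<tau>) / \<tau>) * indicator (cball 0 (sqrt t)) z" for z
      using cball_inter_norm_sq_le[of t s, folded S_def] s
      by (auto simp: H_def set_eq_iff split: split_indicator)
    then have "(\<integral>\<^sup>+z. H z t \<partial>lborel) = ennreal (exp (- t / \<tau>) / \<tau>) * emeasure lborel (cball (0::complex) (sqrt t))"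
      by (simp add: nn_integral_cmult_indicator)
    also have "\<dots> = ennreal (exp (- t / \<tau>) / \<tau> * (pi * t))"
      using True \<tau> by (simp add: emeasure_cball_complex ennreal_mult'[symmetric])
    finally show ?thesis using True by simp
  next
    case False
    then have "H z t = 0" for z
      by (auto simp: H_def split: split_indicator) (meson order.trans zero_le_power2)
    then show ?thesis using False by simp
  qed
  have "(\<integral>\<^sup>+z. indicator (cball (0::complex) s) z * ennreal (exp (- (cmod z)\<^sup>2 / \<tau>)) \<partial>lborel)
     = (\<integral>\<^sup>+z. indicator (cball (0::complex) s) z * ennreal (exp (- S / \<tau>)) \<partial>lborel) +
       (\<integral>\<^sup>+z. (\<integral>\<^sup>+t. H z t \<partial>lborel) \<partial>lborel)"
    unfolding layer_cake using H_meas
    by (intro nn_integral_add) (auto intro!: lborel.borel_measurable_nn_integral_fst[of "case_prod H", simplified])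
  also have "(\<integral>\<^sup>+z. (\<integral>\<^sup>+t. H z t \<partial>lborel) \<partial>lborel) = (\<integral>\<^sup>+t. (\<integral>\<^sup>+z. H z t \<partial>lborel) \<partial>lborel)"
    using lborel_pair.Fubini'[OF H_meas] by simp
  also have "(\<integral>\<^sup>+z. indicator (cball (0::complex) s) z * ennreal (exp (- S / \<tau>)) \<partial>lborel)
      = ennreal (exp (- S / \<tau>) * (pi * S))"
    using s by (simp add: nn_integral_multc emeasure_cball_complex S_def ennreal_mult' mult.commute)
  finally show ?thesis
    unfolding disc_slice S_def .
qed

lemma add_mult_exp_neg_div_le:
  fixes \<tau> S :: real
  assumes "0 < \<tau>"
  shows "(S + \<tau>) * exp (- S / \<tau>) \<le> \<tau>"
proof -
  have "S + \<tau> \<le> \<tau> * exp (S / \<tau>)"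
    using exp_ge_add_one_self[of "S / \<tau>"] assms by (simp add: field_simps)
  then show ?thesis
    by (simp add: exp_minus field_simps)
qed

lemma nn_integral_cball_exp_norm_sq:
  fixes \<tau> s :: real
  assumes \<tau>: "0 < \<tau>" and s: "0 \<le> s"
  shows "(\<integral>\<^sup>+z. indicator (cball (0::complex) s) z * ennreal (exp (- (cmod z)\<^sup>2 / \<tau>)) \<partial>lborel)
      = ennreal (pi * \<tau> * (1 - exp (- s\<^sup>2 / \<tau>)))"
proof -
  have "0 \<le> pi * \<tau> - pi * (s\<^sup>2 + \<tau>) * exp (- s\<^sup>2 / \<tau>)"
    using add_mult_exp_neg_div_le[OF \<tau>, of "s\<^sup>2"] by (simp add: mult.assoc)
  then show ?thesis
    unfolding nn_integral_cball_exp_norm_sq_layer_cake[OF \<tau> s]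
      nn_integral_Icc_exp_mult_linear[OF \<tau> zero_le_power2]
    by (simp add: ennreal_plus[symmetric] algebra_simps del: ennreal_plus)
qed

lemma nn_integral_cball_gaussian:
  fixes \<sigma> s :: real and a :: complex
  assumes "0 < \<sigma>" "0 \<le> s"
  shows "(\<integral>\<^sup>+z. indicator (cball a s) z * ennreal (1 / (pi * \<sigma>\<^sup>2) * exp (- (cmod (z - a))\<^sup>2 / \<sigma>\<^sup>2)) \<partial>lborel)
      = ennreal (1 - exp (- s\<^sup>2 / \<sigma>\<^sup>2))"
proof -
  have [measurable]: "cball a s \<in> sets borel" "cball 0 s \<in> sets borel"
    by (simp_all add: borel_closed)
  have "(\<integral>\<^sup>+z. indicator (cball a s) z * ennreal (1 / (pi * \<sigma>\<^sup>2) * exp (- (cmod (z - a))\<^sup>2 / \<sigma>\<^sup>2)) \<partial>lborel)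
      = (\<integral>\<^sup>+z. indicator (cball a s) (a + z) * ennreal (1 / (pi * \<sigma>\<^sup>2) * exp (- (cmod z)\<^sup>2 / \<sigma>\<^sup>2)) \<partial>lborel)"
    by (subst lborel_distr_plus[symmetric, of a], subst nn_integral_distr) auto
  also have "\<dots> = (\<integral>\<^sup>+z. ennreal (1 / (pi * \<sigma>\<^sup>2)) *
      (indicator (cball 0 s) z * ennreal (exp (- (cmod z)\<^sup>2 / \<sigma>\<^sup>2))) \<partial>lborel)"
    by (intro nn_integral_cong) (auto simp: ennreal_mult[symmetric] dist_norm split: split_indicator)
  also have "\<dots> = ennreal (1 / (pi * \<sigma>\<^sup>2)) * ennreal (pi * \<sigma>\<^sup>2 * (1 - exp (- s\<^sup>2 / \<sigma>\<^sup>2)))"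
    using assms nn_integral_cball_exp_norm_sq[of "\<sigma>\<^sup>2" s] by (subst nn_integral_cmult) auto
  also have "\<dots> = ennreal (1 - exp (- s\<^sup>2 / \<sigma>\<^sup>2))"
    using assms by (simp add: ennreal_mult'[symmetric])
  finally show ?thesis .
qed

lemma set_integral_awgn_density_cball_product:
  fixes a :: "complex ^ 'n::finite" and \<rho> :: "'n \<Rightarrow> real"
  assumes \<sigma>: "0 < \<sigma>" and \<rho>: "\<And>m. 0 \<le> \<rho> m"
  shows "set_lebesgue_integral lborel {y. \<forall>m. y $ m \<in> cball (a $ m) (\<rho> m)} (\<lambda>y. awgn_density \<sigma> y a)
      = (\<Prod>m\<in>UNIV. 1 - exp (- (\<rho> m)\<^sup>2 / \<sigma>\<^sup>2))"
proof -
  define P where "P = {y :: complex ^ 'n. \<forall>m. y $ m \<in> cball (a $ m) (\<rho> m)}"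
  define g where "g m z = indicator (cball (a $ m) (\<rho> m)) z *
      ennreal (1 / (pi * \<sigma>\<^sup>2) * exp (- (cmod (z - a $ m))\<^sup>2 / \<sigma>\<^sup>2))" for m z
  have [measurable]: "P \<in> sets borel"
    unfolding P_def mem_cball by (intro borel_closed closed_Collect_all closed_Collect_le continuous_intros)
  have [measurable]: "cball (a $ m) (\<rho> m) \<in> sets borel" for m by (simp add: borel_closed)
  have "(\<integral>\<^sup>+y. ennreal (indicator P y * awgn_density \<sigma> y a) \<partial>lborel) = (\<integral>\<^sup>+y. (\<Prod>m\<in>UNIV. g m (y $ m)) \<partial>lborel)"
    by (intro nn_integral_cong)
      (simp add: P_def g_def awgn_density_def indicator_def prod.distrib prod_ennreal prod.neutral)
  also have "\<dots> = (\<Prod>m\<in>UNIV. \<integral>\<^sup>+z. g m z \<partial>lborel)"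
    by (rule nn_integral_lborel_vec_prod) (simp add: g_def)
  also have "\<dots> = (\<Prod>m\<in>UNIV. ennreal (1 - exp (- (\<rho> m)\<^sup>2 / \<sigma>\<^sup>2)))"
    unfolding g_def using \<sigma> \<rho> by (intro prod.cong refl nn_integral_cball_gaussian)
  also have "\<dots> = ennreal (\<Prod>m\<in>UNIV. 1 - exp (- (\<rho> m)\<^sup>2 / \<sigma>\<^sup>2))"
    using \<sigma> by (intro prod_ennreal) simp
  finally show ?thesis
    unfolding set_lebesgue_integral_def P_def[symmetric]
    by (subst integral_eq_nn_integral)
      (auto simp: awgn_density_def prod_nonneg intro!: AE_I2 prod_nonneg)
qed

lemma norm_xpt: "cmod (xpt A L \<alpha> c l) = \<bar>A c\<bar>"
  by (simp add: xpt_def norm_mult)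

lemma in_family_xpt_eq_imp_layer_eq:
  assumes fam: "in_family C A L \<alpha> p r M u D"
    and c: "c \<in> {1..C}" and c': "c' \<in> {1..C}" and eq: "xpt A L \<alpha> c l = xpt A L \<alpha> c' l'"
  shows "c = c'"
proof -
  have dec: "\<And>k. k \<in> {1..<C} \<Longrightarrow> - A k < - A (Suc k)"
    and pos: "\<forall>k\<in>{1..C}. 0 < A k"
    using fam by (auto simp: in_family_def)
  have less: "A k' < A k" if "k < k'" "k \<in> {1..C}" "k' \<in> {1..C}" for k k'
    using lift_Suc_mono_less_ivl[of "{1..<C}" "\<lambda>k. - A k", OF dec \<open>k < k'\<close>] that by auto
  have "0 < A c" "0 < A c'"
    using pos c c' by auto
  then have "A c = A c'"
    using arg_cong[OF eq, of cmod] by (simp add: norm_xpt)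
  then show ?thesis
    using less[of c c'] less[of c' c] c c' by (cases c c' rule: linorder_cases) auto
qed

lemma in_family_decoding_set_eq:
  fixes v :: "complex ^ 'n::finite" and lay :: "'n \<Rightarrow> nat"
  assumes fam: "in_family C A L \<alpha> p r M u D"
    and lay: "\<And>m. lay m \<in> {1..C} \<and> v $ m \<in> ulayer A L \<alpha> (lay m)"
  shows "decoding_set C A L \<alpha> r v = {y. \<forall>m. y $ m \<in> cball (v $ m) (r (lay m))}"
proof -
  have "(\<forall>c\<in>{1..C}. \<forall>l<L c. v $ m = xpt A L \<alpha> c l \<longrightarrow> cmod (y $ m - xpt A L \<alpha> c l) \<le> r c)
      \<longleftrightarrow> y $ m \<in> cball (v $ m) (r (lay m))" for y :: "complex ^ 'n" and m
  proof -
    obtain l where l: "l < L (lay m)" "v $ m = xpt A L \<alpha> (lay m) l"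
      using lay[of m] by (auto simp: ulayer_def)
    have "c = lay m" if "c \<in> {1..C}" "v $ m = xpt A L \<alpha> c l'" for c l'
      using in_family_xpt_eq_imp_layer_eq[OF fam that(1), of "lay m" l' l] lay[of m] l that by simp
    then show ?thesis
      using l lay[of m] by (auto simp: dist_norm norm_minus_commute)
  qed
  then show ?thesis
    unfolding decoding_set_def by blast
qed

lemma prod_power_le_prod_comp:
  fixes b :: "'c \<Rightarrow> real" and g :: "'a \<Rightarrow> 'c"
  assumes "finite I" "finite S" "g ` I \<subseteq> S"
    and b: "\<And>c. c \<in> S \<Longrightarrow> 0 \<le> b c \<and> b c \<le> 1"
    and N: "\<And>c. c \<in> S \<Longrightarrow> card {m \<in> I. g m = c} \<le> N c"
  shows "(\<Prod>c\<in>S. b c ^ N c) \<le> (\<Prod>m\<in>I. b (g m))"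
proof -
  have "(\<Prod>c\<in>S. b c ^ N c) \<le> (\<Prod>c\<in>S. b c ^ card {m \<in> I. g m = c})"
    using b N by (intro prod_mono conjI power_decreasing zero_le_power) auto
  also have "\<dots> = (\<Prod>c\<in>S. \<Prod>m\<in>{m \<in> I. g m = c}. b (g m))"
    by (intro prod.cong refl) simp
  also have "\<dots> = (\<Prod>m\<in>I. b (g m))"
    using assms(1-3) by (rule prod.group)
  finally show ?thesis .
qed

lemma in_family_correct_decoding_prob_ge:
  fixes u :: "nat \<Rightarrow> complex ^ 'n::finite"
  assumes \<sigma>: "0 < \<sigma>" and fam: "in_family C A L \<alpha> p r M u D" and i: "i \<in> {1..M}"
  shows "(\<Prod>c\<in>{1..C}. (1 - exp (- (r c)\<^sup>2 / \<sigma>\<^sup>2)) powr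
           (real CARD('n) * (\<Sum>l<L c. type_of_word (u i) (xpt A L \<alpha> c l))))
      \<le> set_lebesgue_integral lborel (D i) (\<lambda>y. awgn_density \<sigma> y (u i))"
proof -
  define v where "v = u i"
  define b where "b c = 1 - exp (- (r c)\<^sup>2 / \<sigma>\<^sup>2)" for c
  define N where "N c = (\<Sum>l<L c. card {m. v $ m = xpt A L \<alpha> c l})" for c
  have r_pos: "0 < r c" if "c \<in> {1..C}" for c
    using fam that by (auto simp: in_family_def)
  have b: "0 < b c \<and> b c \<le> 1" if "c \<in> {1..C}" for c
    using r_pos[OF that] \<sigma> by (simp add: b_def)
  have "\<forall>m. \<exists>c. c \<in> {1..C} \<and> v $ m \<in> ulayer A L \<alpha> c"
    using fam i unfolding in_family_def constellation_def v_def by blast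
  then obtain lay where lay: "\<And>m. lay m \<in> {1..C} \<and> v $ m \<in> ulayer A L \<alpha> (lay m)"
    by metis
  have "D i = {y. \<forall>m. y $ m \<in> cball (v $ m) (r (lay m))}"
    using fam i in_family_decoding_set_eq[OF fam lay] by (simp add: in_family_def v_def)
  moreover have "0 \<le> r (lay m)" for m
    using r_pos lay[of m] by (simp add: less_imp_le)
  ultimately have success: "set_lebesgue_integral lborel (D i) (\<lambda>y. awgn_density \<sigma> y (u i)) = (\<Prod>m\<in>UNIV. b (lay m))"
    unfolding b_def v_def using \<sigma> by (simp only: set_integral_awgn_density_cball_product)
  have exponent: "real CARD('n) * (\<Sum>l<L c. type_of_word v (xpt A L \<alpha> c l)) = real (N c)" for c
    by (simp add: N_def type_of_word_def sum_divide_distrib[symmetric])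
  txt \<open>Equality holds, but the inequality spares us showing that the points of a layer are distinct.\<close>
  have count: "card {m \<in> UNIV. lay m = c} \<le> N c" for c
  proof -
    have "{m \<in> UNIV. lay m = c} \<subseteq> (\<Union>l<L c. {m. v $ m = xpt A L \<alpha> c l})"
      using lay by (auto simp: ulayer_def)
    then have "card {m \<in> UNIV. lay m = c} \<le> card (\<Union>l<L c. {m. v $ m = xpt A L \<alpha> c l})"
      by (intro card_mono) auto
    also have "\<dots> \<le> N c"
      unfolding N_def by (rule card_UN_le) simp
    finally show ?thesis .
  qed
  have "(\<Prod>c\<in>{1..C}. b c powr (real CARD('n) * (\<Sum>l<L c. type_of_word v (xpt A L \<alpha> c l))))
      = (\<Prod>c\<in>{1..C}. b c ^ N c)"
    using b by (intro prod.cong refl) (simp add: exponent powr_realpow)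
  also have "\<dots> \<le> (\<Prod>m\<in>UNIV. b (lay m))"
    by (rule prod_power_le_prod_comp) (use lay b count in \<open>auto intro: less_imp_le\<close>)
  finally show ?thesis
    unfolding success by (simp add: b_def v_def)
qed

lemma card_less_nth_sorted_list_of_set:
  fixes e :: "'a \<Rightarrow> 'b::linorder"
  assumes "finite I" "j < card (e ` I)"
  shows "card {i \<in> I. e i < sorted_list_of_set (e ` I) ! j}
      = (\<Sum>k<j. card {i \<in> I. e i = sorted_list_of_set (e ` I) ! k})"
proof -
  define xs where "xs = sorted_list_of_set (e ` I)"
  have set_xs: "set xs = e ` I" and sorted_xs: "sorted_wrt (<) xs"
    and distinct_xs: "distinct xs" and length_xs: "length xs = card (e ` I)"
    using assms(1) by (simp_all add: xs_def)
  have "{i \<in> I. e i < xs ! j} = (\<Union>k<j. {i \<in> I. e i = xs ! k})"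
  proof (intro set_eqI iffI)
    fix i assume i: "i \<in> {i \<in> I. e i < xs ! j}"
    then obtain k where k: "k < length xs" "e i = xs ! k"
      using set_xs by (metis (mono_tags, lifting) image_eqI in_set_conv_nth mem_Collect_eq)
    have "k < j"
    proof (rule ccontr)
      assume "\<not> k < j"
      then have "xs ! j \<le> xs ! k"
        using k(1) by (intro sorted_nth_mono) (auto simp: xs_def)
      then show False using i k by (auto dest: leD)
    qed
    then show "i \<in> (\<Union>k<j. {i \<in> I. e i = xs ! k})"
      using i k by auto
  next
    fix i assume "i \<in> (\<Union>k<j. {i \<in> I. e i = xs ! k})"
    then obtain k where "k < j" "i \<in> I" "e i = xs ! k" by auto
    moreover have "xs ! k < xs ! j"
      using \<open>k < j\<close> assms(2) length_xs sorted_wrt_nth_less[OF sorted_xs] by auto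
    ultimately show "i \<in> {i \<in> I. e i < xs ! j}" by simp
  qed
  also have "card \<dots> = (\<Sum>k<j. card {i \<in> I. e i = xs ! k})"
  proof (rule card_UN_disjoint)
    show "\<forall>k\<in>{..<j}. \<forall>k'\<in>{..<j}. k \<noteq> k' \<longrightarrow> {i \<in> I. e i = xs ! k} \<inter> {i \<in> I. e i = xs ! k'} = {}"
      using assms(2) length_xs distinct_xs by (auto simp: nth_eq_iff_index_eq)
  qed (use assms(1) in auto)
  finally show ?thesis unfolding xs_def .
qed

lemma energy_outage_le_of_jplus_min:
  fixes u :: "nat \<Rightarrow> complex ^ 'n::finite"
  assumes "0 \<le> \<delta>" and j: "j \<in> jplus_set k1 k2 M u \<delta>"
    and j_min: "\<forall>j'\<in>jplus_set k1 k2 M u \<delta>. j \<le> j'" and B: "B \<le> ebar k1 k2 M u j"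
  shows "energy_outage k1 k2 M u B \<le> \<delta>"
proof -
  define e where "e i = energy k1 k2 (u i)" for i
  define cnt where "cnt k = card {i \<in> {1..M}. e i = ebar k1 k2 M u k}" for k
  have j_range: "1 \<le> j" "j \<le> card (e ` {1..M})"
    using j by (auto simp: jplus_set_def energy_values_def e_def)
  have ebar_nth: "ebar k1 k2 M u k = sorted_list_of_set (e ` {1..M}) ! (k - 1)" for k
    by (simp add: ebar_def energy_values_def e_def)
  have below: "card {i \<in> {1..M}. e i < ebar k1 k2 M u j} = (\<Sum>k\<in>{1..j - 1}. cnt k)"
    using j_range card_less_nth_sorted_list_of_set[of "{1..M}" "j - 1" e]
    by (simp add: ebar_nth cnt_def sum.atLeast1_atMost_eq)
  have "energy_outage k1 k2 M u B \<le> 1 / real M * real (card {i \<in> {1..M}. e i < ebar k1 k2 M u j})"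
    unfolding energy_outage_def e_def using B by (intro mult_left_mono of_nat_mono card_mono) auto
  also have "\<dots> = 1 / real M * (\<Sum>k\<in>{1..j - 1}. real (cnt k))"
    by (simp only: below of_nat_sum)
  also have "\<dots> \<le> \<delta>"
  proof (cases "j = 1")
    case False
    then have "j - 1 \<notin> jplus_set k1 k2 M u \<delta>"
      using j_min j_range by fastforce
    then show ?thesis
      using False j_range by (auto simp: jplus_set_def energy_values_def cnt_def e_def)
  qed (simp add: \<open>0 \<le> \<delta>\<close>)
  finally show ?thesis .
qed

lemma avg_error_eq:
  "1 \<le> M \<Longrightarrow> avg_error \<sigma> M u D
      = 1 - 1 / real M * (\<Sum>i\<in>{1..M}. set_lebesgue_integral lborel (D i) (\<lambda>y. awgn_density \<sigma> y (u i)))"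
  by (simp add: avg_error_def sum_subtractf field_simps)

theorem theorem3:
  fixes C M :: nat and A \<alpha> p r :: "nat \<Rightarrow> real" and L :: "nat \<Rightarrow> nat"
    and u :: "nat \<Rightarrow> complex ^ 'n::finite" and D :: "nat \<Rightarrow> (complex ^ 'n) set"
    and \<sigma> k1 k2 \<epsilon> B \<delta> :: real
  assumes "0 < \<sigma>" and "0 < k1" and "0 < k2" and "1 \<le> M"
    and fam: "in_family C A L \<alpha> p r M u D"
    and code: "is_code (constellation C A L \<alpha>) M u D"
    and h_eps: "\<epsilon> \<ge> 1 - (1 / real M) * (\<Sum>i\<in>{1..M}. \<Prod>c\<in>{1..C}.
                 (1 - exp (- (r c)\<^sup>2 / \<sigma>\<^sup>2)) powr
                   (real CARD('n) * (\<Sum>l<L c. type_of_word (u i) (xpt A L \<alpha> c l))))"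
    and h_rate: "code_rate TYPE('n) M \<le>
                 log 2 (real_of_int (\<Sum>c\<in>{1..C}. \<lfloor>pi / (2 * arcsin (r c / (2 * A c)))\<rfloor>))"
    and h_delta: "\<delta> \<ge> (1 / real M) * (\<Sum>i\<in>{1..M}.
                 (if (\<Sum>c\<in>{1..C}. \<Sum>l<L c. type_of_word (u i) (xpt A L \<alpha> c l) * (k1 * (A c)\<^sup>2 + k2 * (A c) ^ 4))
                      < B / real CARD('n) then 1 else 0))"
    and h_B: "\<exists>j\<in>jplus_set k1 k2 M u \<delta>. (\<forall>j'\<in>jplus_set k1 k2 M u \<delta>. j \<le> j') \<and> B \<le> ebar k1 k2 M u j"
  shows "is_code_eBd \<sigma> k1 k2 (constellation C A L \<alpha>) M u D \<epsilon> B \<delta>"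
proof -
  txt \<open>\<open>h_delta\<close> only serves to give \<open>\<delta> \<ge> 0\<close>.\<close>
  have "0 \<le> \<delta>"
    by (rule order.trans[OF _ h_delta]) (simp add: sum_nonneg)
  have "avg_error \<sigma> M u D
      = 1 - 1 / real M * (\<Sum>i\<in>{1..M}. set_lebesgue_integral lborel (D i) (\<lambda>y. awgn_density \<sigma> y (u i)))"
    using \<open>1 \<le> M\<close> by (rule avg_error_eq)
  also have "\<dots> \<le> 1 - (1 / real M) * (\<Sum>i\<in>{1..M}. \<Prod>c\<in>{1..C}.
      (1 - exp (- (r c)\<^sup>2 / \<sigma>\<^sup>2)) powr (real CARD('n) * (\<Sum>l<L c. type_of_word (u i) (xpt A L \<alpha> c l))))"
    using \<open>0 < \<sigma>\<close> fam
    by (intro diff_left_mono mult_left_mono sum_mono in_family_correct_decoding_prob_ge) auto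
  also have "\<dots> \<le> \<epsilon>"
    by (rule h_eps)
  finally have "avg_error \<sigma> M u D \<le> \<epsilon>" .
  moreover have "energy_outage k1 k2 M u B \<le> \<delta>"
    using h_B energy_outage_le_of_jplus_min[OF \<open>0 \<le> \<delta>\<close>] by blast
  ultimately show ?thesis
    using code by (simp add: is_code_eBd_def)
qed

end
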